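(* In the whitened Gaussian spiked model (context), condition on the event $\mathcal{E}$. Let $(i_0,j_0)=\arg\max_{i,j}|(\widehat{\boldsymbol{\Sigma}}_{xy})_{ij}|$. There is a constant $C>0$ such that for any $\gamma\in(0,1)$, if $$m\ge\frac{C(1+\rho)^2}{\rho^2(1-\sqrt{\gamma})^2}\,s_{\mathbf{u}}(1)s_{\mathbf{v}}(1)\log n,$$ then $|u_{i_0}|\,|v_{j_0}|\ge\sqrt{\gamma/(s_{\mathbf{u}}(1)s_{\mathbf{v}}(1))}$.
   Context: Model: $m$ i.i.d. samples $(\mathbf{x}_i,\mathbf{y}_i)$ from a zero-mean jointly Gaussian law on $\mathbb{R}^n\times\mathbb{R}^n$ with $\boldsymbol{\Sigma}_{xx}=\boldsymbol{\Sigma}_{yy}=\mathbf{I}_n$, $\boldsymbol{\Sigma}_{xy}=\rho\mathbf{u}\mathbf{v}^\top$, $\rho\in(0,1)$, $\|\mathbf{u}\|_2=\|\mathbf{v}\|_2=1$, $\|\mathbf{u}\|_0\le k_{\mathbf{u}}$, $\|\mathbf{v}\|_0\le k_{\mathbf{v}}$. $\widehat{\boldsymbol{\Sigma}}_{xy}=\frac1m\sum_i\mathbf{x}_i\mathbf{y}_i^\top$, $\mathbf{W}=\widehat{\boldsymbol{\Sigma}}_{xy}-\rho\mathbf{u}\mathbf{v}^\top$. Event $\mathcal{E}$: for all $S_1,S_2\subset[n]$ with $|S_1|\le k_{\mathbf{u}}$, $|S_2|\le k_{\mathbf{v}}$, $\|\mathbf{W}_{S_1,S_2}\|_2\le C'\sqrt{((|S_1|+|S_2|)\log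 n+c'\log n)/m}$ for fixed constants $C',c'>0$ (submatrix, spectral norm). Structure functions: $s_{\mathbf{u}}(p)=(\sum_{i=1}^pu_{(i)}^2)^{-1}$, $s_{\mathbf{v}}(q)=(\sum_{j=1}^qv_{(j)}^2)^{-1}$, where $u_{(i)}$ is the $i$-th largest entry of $\mathbf{u}$ in absolute value; thus $s_{\mathbf{u}}(1)=1/u_{(1)}^2$. *)

theory Defs
  imports Complex_Main
begin

text \<open>Vectors of R^n are functions nat => real (only indices < n matter);
 n x n matrices are functions nat => nat => real.\<close>

definition sample_cross_cov :: "nat \<Rightarrow> (nat \<Rightarrow> nat \<Rightarrow> real) \<Rightarrow> (nat \<Rightarrow> nat \<Rightarrow> real) \<Rightarrow> nat \<Rightarrow> nat \<Rightarrow> real" where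
  "sample_cross_cov m x y i j = (1 / real m) * (\<Sum>l<m. x l i * y l j)"

definition sub_spec_norm :: "(nat \<Rightarrow> nat \<Rightarrow> real) \<Rightarrow> nat set \<Rightarrow> nat set \<Rightarrow> real" where
  "sub_spec_norm A S1 S2 =
     Sup {sqrt (\<Sum>i\<in>S1. (\<Sum>j\<in>S2. A i j * b j)^2) | b. (\<Sum>j\<in>S2. (b j)^2) \<le> 1}"

definition l0_norm :: "nat \<Rightarrow> (nat \<Rightarrow> real) \<Rightarrow> nat" where
  "l0_norm n u = card {i. i < n \<and> u i \<noteq> 0}"

text \<open>u_(i): the i-th largest entry (1-based) of u in absolute value.\<close>
definition abs_order_stat :: "nat \<Rightarrow> (nat \<Rightarrow> real) \<Rightarrow> nat \<Rightarrow> real" where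
  "abs_order_stat n u i = rev (sort (map (\<lambda>k. \<bar>u k\<bar>) [0..<n])) ! (i - 1)"

definition struct_fun :: "nat \<Rightarrow> (nat \<Rightarrow> real) \<Rightarrow> nat \<Rightarrow> real" where
  "struct_fun n u p = inverse (\<Sum>i=1..p. (abs_order_stat n u i)^2)"

end

theory Submission
  imports Defs
begin

(* On the event, already the 1 x 1 submatrices show that every entry of the sample
   cross-covariance lies within delta = C' sqrt((2 + c') log n / m) of rho u_i v_j.
   Let (p, q) maximise |u_p| |v_q|, i.e. |u_p| |v_q| = (s_u(1) s_v(1))^(-1/2). Maximality of
   the entry (i0, j0) then gives
     rho |u_i0 v_j0| + delta >= |Sigma_i0j0| >= |Sigma_pq| >= rho |u_p v_q| - delta,
   and the sample size condition makes 2 delta <= rho (1 - sqrt gamma) |u_p v_q|, even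
   without its factor (1 + rho)^2. *)

lemma abs_order_stat_1_attained:
  assumes "0 < n"
  shows "\<exists>k<n. abs_order_stat n u 1 = \<bar>u k\<bar> \<and> (\<forall>j<n. \<bar>u j\<bar> \<le> \<bar>u k\<bar>)"
proof -
  define xs where "xs = sort (map (\<lambda>k. \<bar>u k\<bar>) [0..<n])"
  have len: "length xs = n" by (simp add: xs_def)
  have top: "abs_order_stat n u 1 = xs ! (n - 1)"
    using assms by (simp add: abs_order_stat_def xs_def[symmetric] rev_nth len)
  have "xs ! (n - 1) \<in> set xs" using assms len by simp
  then obtain k where k: "k < n" "xs ! (n - 1) = \<bar>u k\<bar>" by (auto simp: xs_def)
  have "\<bar>u j\<bar> \<le> xs ! (n - 1)" if "j < n" for j
  proof -
    have "\<bar>u j\<bar> \<in> set xs" using that by (simp add: xs_def)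
    then obtain i where "i < n" "\<bar>u j\<bar> = xs ! i" by (metis in_set_conv_nth len)
    then show ?thesis
      using sorted_nth_mono[of xs i "n - 1"] len by (simp add: xs_def)
  qed
  then show ?thesis using top k by auto
qed

lemma struct_fun_1_unit_vector:
  assumes "0 < n" and "(\<Sum>i<n. (u i)^2) = 1"
  obtains k where "k < n" "u k \<noteq> 0" "struct_fun n u 1 = inverse ((u k)^2)"
proof -
  obtain k where k: "k < n" "abs_order_stat n u 1 = \<bar>u k\<bar>" and max: "\<forall>j<n. \<bar>u j\<bar> \<le> \<bar>u k\<bar>"
    using abs_order_stat_1_attained[OF assms(1)] by blast
  have "u k \<noteq> 0"
  proof
    assume "u k = 0"
    then have "(\<Sum>i<n. (u i)^2) = 0" using max by simp
    with assms(2) show False by simp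
  qed
  moreover have "struct_fun n u 1 = inverse ((u k)^2)"
    using k(2) by (simp add: struct_fun_def)
  ultimately show thesis using that k(1) by blast
qed

lemma l0_norm_ge_1:
  assumes "k < n" and "u k \<noteq> 0"
  shows "1 \<le> l0_norm n u"
proof -
  have "card {k} \<le> card {i. i < n \<and> u i \<noteq> 0}" using assms by (intro card_mono) auto
  then show ?thesis by (simp add: l0_norm_def)
qed

lemma abs_le_sub_spec_norm_singleton: "\<bar>A i j\<bar> \<le> sub_spec_norm A {i} {j}"
proof -
  let ?N = "{sqrt (\<Sum>i\<in>{i}. (\<Sum>j\<in>{j}. A i j * b j)^2) | b. (\<Sum>j\<in>{j}. (b j)^2) \<le> 1}"
  have "\<bar>A i j\<bar> \<in> ?N" by (rule CollectI, rule exI[of _ "\<lambda>_. 1"]) simp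
  moreover have "bdd_above ?N"
  proof (rule bdd_aboveI)
    fix z assume "z \<in> ?N"
    then obtain b where b: "(b j)^2 \<le> 1" "z = \<bar>A i j\<bar> * \<bar>b j\<bar>" by (auto simp: abs_mult)
    then have "\<bar>b j\<bar> \<le> 1" by (simp add: abs_square_le_1)
    then show "z \<le> \<bar>A i j\<bar>" using b(2) by (simp add: mult_left_le)
  qed
  ultimately show ?thesis unfolding sub_spec_norm_def by (rule cSup_upper)
qed

lemma argmax_entry_lower_bound:
  fixes S :: "'a \<Rightarrow> 'b \<Rightarrow> real" and a :: "'a \<Rightarrow> real" and b :: "'b \<Rightarrow> real"
  assumes "\<bar>S i0 j0 - \<rho> * a i0 * b j0\<bar> \<le> \<delta>" and "\<bar>S p q - \<rho> * a p * b q\<bar> \<le> \<delta>"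
    and "\<bar>S p q\<bar> \<le> \<bar>S i0 j0\<bar>" and "0 < \<rho>"
    and "2 * \<delta> \<le> \<rho> * (1 - t) * (\<bar>a p\<bar> * \<bar>b q\<bar>)"
  shows "t * (\<bar>a p\<bar> * \<bar>b q\<bar>) \<le> \<bar>a i0\<bar> * \<bar>b j0\<bar>"
proof -
  have "\<rho> * (\<bar>a p\<bar> * \<bar>b q\<bar>) - \<delta> \<le> \<bar>S p q\<bar>"
    using assms(2,4) abs_triangle_ineq2[of "\<rho> * a p * b q" "S p q"]
    by (simp add: abs_mult abs_minus_commute)
  also have "\<dots> \<le> \<bar>S i0 j0\<bar>" by (fact assms(3))
  also have "\<dots> \<le> \<rho> * (\<bar>a i0\<bar> * \<bar>b j0\<bar>) + \<delta>"
    using assms(1,4) abs_triangle_ineq2[of "S i0 j0" "\<rho> * a i0 * b j0"] by (simp add: abs_mult)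
  finally have "\<rho> * (t * (\<bar>a p\<bar> * \<bar>b q\<bar>)) \<le> \<rho> * (\<bar>a i0\<bar> * \<bar>b j0\<bar>)"
    using assms(5) by (simp add: algebra_simps)
  then show ?thesis using assms(4) by simp
qed

lemma twice_deviation_le_of_sample_size:
  fixes K L m \<rho> g a :: real
  assumes "0 < m" "0 \<le> K" "0 \<le> L" "0 < \<rho>" "0 < g" "0 < a"
    and "4 * K * (1 + \<rho>)^2 / (\<rho>^2 * g^2) * inverse (a^2) * L \<le> m"
  shows "2 * sqrt (K * L / m) \<le> \<rho> * g * a"
proof -
  have "1 \<le> (1 + \<rho>)^2" using assms(4) by (simp add: one_le_power)
  then have "4 * K * L * 1 \<le> 4 * K * L * (1 + \<rho>)^2"
    using assms(2,3) by (intro mult_left_mono) auto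
  also have "\<dots> = 4 * K * (1 + \<rho>)^2 * L" by (simp add: mult_ac)
  also have "\<dots> \<le> m * (\<rho> * g * a)^2"
    using assms(4-7) by (simp add: field_simps power_mult_distrib)
  finally have "4 * (K * L / m) \<le> (\<rho> * g * a)^2"
    using assms(1) by (simp add: field_simps)
  then have "sqrt (4 * (K * L / m)) \<le> sqrt ((\<rho> * g * a)^2)"
    by (rule real_sqrt_le_mono)
  moreover have "sqrt (4 * (K * L / m)) = 2 * sqrt (K * L / m)"
    by (simp only: real_sqrt_mult real_sqrt_four)
  moreover have "sqrt ((\<rho> * g * a)^2) = \<rho> * g * a" using assms(4-6) by simp
  ultimately show ?thesis by simp
qed

lemma entry_deviation_le_of_event:
  fixes A :: "nat \<Rightarrow> nat \<Rightarrow> real"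
  assumes "\<forall>S1 S2. S1 \<subseteq> {..<n} \<longrightarrow> S2 \<subseteq> {..<n} \<longrightarrow> card S1 \<le> ku \<longrightarrow> card S2 \<le> kv \<longrightarrow>
      sub_spec_norm A S1 S2 \<le> C' * sqrt ((real (card S1 + card S2) * ln (real n) + c' * ln (real n)) / real m)"
    and "1 \<le> ku" "1 \<le> kv" "i < n" "j < n"
  shows "\<bar>A i j\<bar> \<le> C' * sqrt ((2 + c') * ln (real n) / real m)"
proof -
  have "\<bar>A i j\<bar> \<le> sub_spec_norm A {i} {j}" by (rule abs_le_sub_spec_norm_singleton)
  also have "\<dots> \<le> C' * sqrt ((real (card {i} + card {j}) * ln (real n) + c' * ln (real n)) / real m)"
    using assms(1)[rule_format, of "{i}" "{j}"] assms(2-5) by simp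
  also have "\<dots> = C' * sqrt ((2 + c') * ln (real n) / real m)" by (simp add: algebra_simps)
  finally show ?thesis .
qed

lemma argmax_entry_spike_lower_bound:
  fixes m :: nat and u v :: "nat \<Rightarrow> real" and x y :: "nat \<Rightarrow> nat \<Rightarrow> real"
  defines "S \<equiv> sample_cross_cov m x y"
  assumes "0 < C'" "0 < c'" "0 < \<rho>" "1 \<le> m" "\<gamma> < 1"
    and u_unit: "(\<Sum>i<n. (u i)^2) = 1" and v_unit: "(\<Sum>j<n. (v j)^2) = 1"
    and ku: "l0_norm n u \<le> ku" and kv: "l0_norm n v \<le> kv"
    and event: "\<forall>S1 S2. S1 \<subseteq> {..<n} \<longrightarrow> S2 \<subseteq> {..<n} \<longrightarrow> card S1 \<le> ku \<longrightarrow> card S2 \<le> kv \<longrightarrow>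
       sub_spec_norm (\<lambda>i j. S i j - \<rho> * u i * v j) S1 S2
         \<le> C' * sqrt ((real (card S1 + card S2) * ln (real n) + c' * ln (real n)) / real m)"
    and "i0 < n" "j0 < n" and argmax: "\<forall>i<n. \<forall>j<n. \<bar>S i j\<bar> \<le> \<bar>S i0 j0\<bar>"
    and sample_size: "real m \<ge> 4 * (C'^2 * (2 + c')) * (1 + \<rho>)^2 / (\<rho>^2 * (1 - sqrt \<gamma>)^2)
                * struct_fun n u 1 * struct_fun n v 1 * ln (real n)"
  shows "sqrt (\<gamma> / (struct_fun n u 1 * struct_fun n v 1)) \<le> \<bar>u i0\<bar> * \<bar>v j0\<bar>"
proof -
  have n: "0 < n" using \<open>i0 < n\<close> by simp
  obtain p where p: "p < n" "u p \<noteq> 0" "struct_fun n u 1 = inverse ((u p)^2)"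
    using struct_fun_1_unit_vector[OF n u_unit] .
  obtain q where q: "q < n" "v q \<noteq> 0" "struct_fun n v 1 = inverse ((v q)^2)"
    using struct_fun_1_unit_vector[OF n v_unit] .
  define \<delta> where "\<delta> = C' * sqrt ((2 + c') * ln (real n) / real m)"
  have "1 \<le> ku" "1 \<le> kv" using l0_norm_ge_1 p q ku kv by (meson order_trans)+
  then have entry: "\<bar>S i j - \<rho> * u i * v j\<bar> \<le> \<delta>" if "i < n" "j < n" for i j
    using entry_deviation_le_of_event[OF event] that by (simp add: \<delta>_def)
  define a where "a = \<bar>u p\<bar> * \<bar>v q\<bar>"
  have a: "0 < a" using p q by (simp add: a_def)
  have struct_prod: "struct_fun n u 1 * struct_fun n v 1 = inverse (a^2)"
    using p q by (simp add: a_def power_mult_distrib)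
  have "\<delta> = sqrt (C'^2 * (2 + c') * ln (real n) / real m)"
    using assms(2) by (simp add: \<delta>_def real_sqrt_mult real_sqrt_divide)
  also have "2 * \<dots> \<le> \<rho> * (1 - sqrt \<gamma>) * a"
    using sample_size assms(2-6) a n
    by (intro twice_deviation_le_of_sample_size) (simp_all add: struct_prod[symmetric] mult.assoc)
  finally have "sqrt \<gamma> * a \<le> \<bar>u i0\<bar> * \<bar>v j0\<bar>"
    using argmax_entry_lower_bound[of S i0 j0 \<rho> u v \<delta> p q "sqrt \<gamma>"]
      entry \<open>i0 < n\<close> \<open>j0 < n\<close> p q argmax assms(4) by (simp add: a_def)
  moreover have "sqrt (\<gamma> / (struct_fun n u 1 * struct_fun n v 1)) = sqrt (\<gamma> * a^2)"
    by (simp only: struct_prod divide_inverse inverse_inverse_eq)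
  moreover have "sqrt (\<gamma> * a^2) = sqrt \<gamma> * a"
    using a by (simp add: real_sqrt_mult)
  ultimately show ?thesis by simp
qed

theorem proposition2:
  fixes C' c' :: real
  assumes "C' > 0" and "c' > 0"
  shows "\<exists>C > 0. \<forall>(n::nat) (m::nat) (\<rho>::real) (u::nat \<Rightarrow> real) (v::nat \<Rightarrow> real) (ku::nat) (kv::nat)
      (x::nat \<Rightarrow> nat \<Rightarrow> real) (y::nat \<Rightarrow> nat \<Rightarrow> real) (\<gamma>::real) (i0::nat) (j0::nat).
    0 < \<rho> \<longrightarrow> \<rho> < 1 \<longrightarrow> m \<ge> 1 \<longrightarrow>
    (\<Sum>i<n. (u i)^2) = 1 \<longrightarrow> (\<Sum>j<n. (v j)^2) = 1 \<longrightarrow>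
    l0_norm n u \<le> ku \<longrightarrow> l0_norm n v \<le> kv \<longrightarrow>
    (\<forall>S1 S2. S1 \<subseteq> {..<n} \<longrightarrow> S2 \<subseteq> {..<n} \<longrightarrow> card S1 \<le> ku \<longrightarrow> card S2 \<le> kv \<longrightarrow>
       sub_spec_norm (\<lambda>i j. sample_cross_cov m x y i j - \<rho> * u i * v j) S1 S2
         \<le> C' * sqrt ((real (card S1 + card S2) * ln (real n) + c' * ln (real n)) / real m)) \<longrightarrow>
    i0 < n \<longrightarrow> j0 < n \<longrightarrow>
    (\<forall>i<n. \<forall>j<n. \<bar>sample_cross_cov m x y i j\<bar> \<le> \<bar>sample_cross_cov m x y i0 j0\<bar>) \<longrightarrow>
    0 < \<gamma> \<longrightarrow> \<gamma> < 1 \<longrightarrow>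
    real m \<ge> C * (1 + \<rho>)^2 / (\<rho>^2 * (1 - sqrt \<gamma>)^2)
                * struct_fun n u 1 * struct_fun n v 1 * ln (real n) \<longrightarrow>
    \<bar>u i0\<bar> * \<bar>v j0\<bar> \<ge> sqrt (\<gamma> / (struct_fun n u 1 * struct_fun n v 1))"
proof (intro exI[of _ "4 * (C'^2 * (2 + c'))"] conjI allI impI)
  show "0 < 4 * (C'^2 * (2 + c'))" using assms by simp
qed (rule argmax_entry_spike_lower_bound[OF assms], assumption+)

end
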